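(* a) For all $k' \in \mathbf{N}$ and all $k \in \mathbf{N}_-$, $$\hat{\sigma}^{k'}(\hat{\Phi}^\alpha(\mu, \cdot))(k) = \hat{\Phi}^{\hat{\sigma}^{k'}(\alpha)}(\hat{\Phi}^\alpha(\mu, k'-1), k).$$ b) For all $t' \in \mathbf{R}$ and all $t \in \mathbf{R}$, $$\sigma^{t'}(\Phi^\rho(\mu, \cdot))(t) = \Phi^{\sigma^{t'}(\rho)}(\Phi^\rho(\mu, t'-0), t).$$
   Context: Let $\mathbf{B}=\{0,1\}$ with the discrete topology, $\mathbf{N}_-=\{-1,0,1,\dots\}$, and let a function $\Phi:\mathbf{B}^n\to\mathbf{B}^n$ and an initial state $\mu\in\mathbf{B}^n$ be given. For $\lambda\in\mathbf{B}^n$, $\Phi^\lambda:\mathbf{B}^n\to\mathbf{B}^n$ is defined by $\Phi^\lambda_i(\mu)=\Phi_i(\mu)$ if $\lambda_i=1$ and $\Phi^\lambda_i(\mu)=\mu_i$ if $\lambda_i=0$; for $\alpha^0,\dots,\alpha^{k+1}\in\mathbf{B}^n$ one sets iteratively $\Phi^{\alpha^0\dots\alpha^{k}\alpha^{k+1}}(\mu)=\Phi^{\alpha^{k+1}}(\Phi^{\alpha^0\dots\alpha^k}(\mu))$. Discrete time: a computation function is a sequence $\alpha:\mathbf{N}\to\mathbf{B}^n$ (write $\alpha^k=\alpha(k)$); it is progressive if for every $i\in\{1,\dots,n\}$ the set $\{k\in\mathbf{N}\mid \alpha_i^k=1\}$ is infinite. Let $\alpha$ be progressive. The discrete time flow is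 $\hat{\Phi}^\alpha(\mu,-1)=\mu$ and $\hat{\Phi}^\alpha(\mu,k)=\Phi^{\alpha^0\dots\alpha^k}(\mu)$ for $k\ge 0$. For $k'\in\mathbf{N}$ the forgetful functions are $\hat{\sigma}^{k'}(\hat{x})(k)=\hat{x}(k+k')$ for signals $\hat{x}:\mathbf{N}_-\to\mathbf{B}^n$, and $(\hat{\sigma}^{k'}(\alpha))^k=\alpha^{k+k'}$ for computation functions. Real time: $(t_k)_{k\in\mathbf{N}}$ is a strictly increasing real sequence unbounded from above, and $\rho:\mathbf{R}\to\mathbf{B}^n$ is $\rho(t)=\alpha^0\chi_{\{t_0\}}(t)\oplus\alpha^1\chi_{\{t_1\}}(t)\oplus\dots\oplus\alpha^k\chi_{\{t_k\}}(t)\oplus\dots$, where $\chi_A$ is the characteristic function of $A\subset\mathbf{R}$ and $\alpha$ is the progressive sequence above (so for each $i$ the set $\{t\mid\rho_i(t)=1\}$ is unbounded from above). The real time flow is $\Phi^\rho(\mu,t)=\hat{\Phi}^\alpha(\mu,-1)\chi_{(-\infty,t_0)}(t)\oplus\hat{\Phi}^\alpha(\mu,0)\chi_{[t_0,t_1)}(t)\oplus\dots\oplus\hat{\Phi}^\alpha(\mu,k)\chi_{[t_k,t_{k+1})}(t)\oplus\dots$ (and similarly for any other function of this form in place of $\rho$). For a piecewise constant signal $x:\mathbf{R}\to\mathbf{B}^n$ of this kind, $x(t-0)$ denotes its left limit at $t$ (the value taken by $x$ on some interval $(t-\varepsilon,t)$). For $t'\in\mathbf{R}$ the forgetful functions are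 $\sigma^{t'}(x)(t)=x(t)$ if $t\ge t'$ and $\sigma^{t'}(x)(t)=x(t'-0)$ if $t<t'$, and $\sigma^{t'}(\rho)(t)=\rho(t)\cdot\chi_{[t',\infty)}(t)$. *)

theory Defs
  imports Main "HOL.Real"
begin

text \<open>States in B^n are modelled as functions 'n \<Rightarrow> bool, 'n a finite index type (n = CARD('n)).\<close>

definition upd :: "(('n \<Rightarrow> bool) \<Rightarrow> ('n \<Rightarrow> bool)) \<Rightarrow> ('n \<Rightarrow> bool) \<Rightarrow> ('n \<Rightarrow> bool) \<Rightarrow> ('n \<Rightarrow> bool)"
  where "upd \<Phi> lam \<mu> = (\<lambda>i. if lam i then \<Phi> \<mu> i else \<mu> i)"

fun iter :: "(('n \<Rightarrow> bool) \<Rightarrow> ('n \<Rightarrow> bool)) \<Rightarrow> (nat \<Rightarrow> 'n \<Rightarrow> bool) \<Rightarrow> ('n \<Rightarrow> bool) \<Rightarrow> nat \<Rightarrow> ('n \<Rightarrow> bool)"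
  where "iter \<Phi> \<alpha> \<mu> 0 = \<mu>"
  | "iter \<Phi> \<alpha> \<mu> (Suc m) = upd \<Phi> (\<alpha> m) (iter \<Phi> \<alpha> \<mu> m)"

definition progressive :: "(nat \<Rightarrow> 'n \<Rightarrow> bool) \<Rightarrow> bool"
  where "progressive \<alpha> \<longleftrightarrow> (\<forall>i. infinite {k. \<alpha> k i})"

text \<open>Discrete time flow on N_- = {-1,0,1,...} (int k with k \<ge> -1):
  dflow (-1) = mu, dflow k = Phi^{alpha^0...alpha^k}(mu) for k \<ge> 0.\<close>
definition dflow :: "(('n \<Rightarrow> bool) \<Rightarrow> ('n \<Rightarrow> bool)) \<Rightarrow> (nat \<Rightarrow> 'n \<Rightarrow> bool) \<Rightarrow> ('n \<Rightarrow> bool) \<Rightarrow> int \<Rightarrow> ('n \<Rightarrow> bool)"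
  where "dflow \<Phi> \<alpha> \<mu> k = iter \<Phi> \<alpha> \<mu> (nat (k + 1))"

definition sigd :: "nat \<Rightarrow> (int \<Rightarrow> 'a) \<Rightarrow> int \<Rightarrow> 'a"
  where "sigd k' x k = x (k + int k')"

definition sigd_alpha :: "nat \<Rightarrow> (nat \<Rightarrow> 'a) \<Rightarrow> nat \<Rightarrow> 'a"
  where "sigd_alpha k' \<alpha> k = \<alpha> (k + k')"

text \<open>Real time: rho = sum_k alpha^k chi_{t_k}.\<close>
definition rho_of :: "(nat \<Rightarrow> real) \<Rightarrow> (nat \<Rightarrow> 'n \<Rightarrow> bool) \<Rightarrow> real \<Rightarrow> 'n \<Rightarrow> bool"
  where "rho_of ts \<alpha> t = (if \<exists>k. ts k = t then \<alpha> (THE k. ts k = t) else (\<lambda>_. False))"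

definition is_rep :: "(real \<Rightarrow> 'n \<Rightarrow> bool) \<Rightarrow> (nat \<Rightarrow> real) \<Rightarrow> (nat \<Rightarrow> 'n \<Rightarrow> bool) \<Rightarrow> bool"
  where "is_rep \<rho> ts \<alpha> \<longleftrightarrow> strict_mono ts \<and> (\<forall>M. \<exists>k. M < ts k) \<and> \<rho> = rho_of ts \<alpha>"

definition rflow_rep :: "(('n \<Rightarrow> bool) \<Rightarrow> ('n \<Rightarrow> bool)) \<Rightarrow> (nat \<Rightarrow> real) \<Rightarrow> (nat \<Rightarrow> 'n \<Rightarrow> bool) \<Rightarrow> ('n \<Rightarrow> bool) \<Rightarrow> real \<Rightarrow> ('n \<Rightarrow> bool)"
  where "rflow_rep \<Phi> ts \<alpha> \<mu> t =
    (if t < ts 0 then \<mu> else dflow \<Phi> \<alpha> \<mu> (int (THE k. ts k \<le> t \<and> t < ts (Suc k))))"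

definition rflow :: "(('n \<Rightarrow> bool) \<Rightarrow> ('n \<Rightarrow> bool)) \<Rightarrow> (real \<Rightarrow> 'n \<Rightarrow> bool) \<Rightarrow> ('n \<Rightarrow> bool) \<Rightarrow> real \<Rightarrow> ('n \<Rightarrow> bool)"
  where "rflow \<Phi> \<rho> \<mu> t =
    (let p = (SOME p. is_rep \<rho> (fst p) (snd p)) in rflow_rep \<Phi> (fst p) (snd p) \<mu> t)"

definition left_lim :: "(real \<Rightarrow> 'a) \<Rightarrow> real \<Rightarrow> 'a"
  where "left_lim x t = (THE v. \<exists>e>0. \<forall>s. t - e < s \<and> s < t \<longrightarrow> x s = v)"

definition sigr :: "real \<Rightarrow> (real \<Rightarrow> 'a) \<Rightarrow> real \<Rightarrow> 'a"
  where "sigr t' x t = (if t' \<le> t then x t else left_lim x t')"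

definition sigr_rho :: "real \<Rightarrow> (real \<Rightarrow> 'n \<Rightarrow> bool) \<Rightarrow> real \<Rightarrow> 'n \<Rightarrow> bool"
  where "sigr_rho t' \<rho> t = (if t' \<le> t then \<rho> t else (\<lambda>_. False))"

end

theory Submission
  imports Defs
begin

text \<open>Part a) is the semigroup law of the iterates. For part b) the real time flow is rewritten
  without reference to a representation (t_k, \<alpha>) of \<rho>: at time t it is obtained by applying
  the updates \<rho> s in increasing order of the finitely many instants s \<le> t with \<rho> s \<noteq> 0.
  Cutting this ordered list at t' splits it into the instants before t', which produce the left
  limit at t', and the instants from t' on, which are exactly those of the restriction of \<rho>
  to [t', \<infinity>).\<close>

lemma iter_add:
  "iter \<Phi> \<alpha> \<mu> (m + k') = iter \<Phi> (sigd_alpha k' \<alpha>) (iter \<Phi> \<alpha> \<mu> k') m"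
  by (induction m) (simp_all add: sigd_alpha_def add.commute)

lemma iter_foldl: "iter \<Phi> \<alpha> \<mu> n = foldl (\<lambda>st k. upd \<Phi> (\<alpha> k) st) \<mu> [0..<n]"
  by (induction n) simp_all

lemma upd_False [simp]: "upd \<Phi> (\<lambda>_. False) st = st"
  by (simp add: upd_def)

lemma foldl_filter_idle:
  assumes "\<And>s st. \<not> P s \<Longrightarrow> f st s = st"
  shows "foldl f st (filter P xs) = foldl f st xs"
  using assms by (induction xs arbitrary: st) auto

lemma sorted_list_of_set_Un_less:
  fixes A B :: "'a::linorder set"
  assumes "finite A" "finite B" "\<forall>a\<in>A. \<forall>b\<in>B. a < b"
  shows "sorted_list_of_set (A \<union> B) = sorted_list_of_set A @ sorted_list_of_set B"
proof -
  let ?xs = "sorted_list_of_set A @ sorted_list_of_set B"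
  have "sorted ?xs" "distinct ?xs" "set ?xs = A \<union> B"
    using assms by (auto simp: sorted_append distinct_append less_imp_le)
  then show ?thesis by (metis sorted_list_of_set.idem_if_sorted_distinct)
qed

lemma left_lim_eqI:
  assumes "e > 0" and "\<And>s. t - e < s \<Longrightarrow> s < t \<Longrightarrow> x s = v"
  shows "left_lim x t = v"
  unfolding left_lim_def
proof (rule the_equality)
  show "\<exists>e>0. \<forall>s. t - e < s \<and> s < t \<longrightarrow> x s = v" using assms by blast
next
  fix w assume "\<exists>e>0. \<forall>s. t - e < s \<and> s < t \<longrightarrow> x s = w"
  then obtain e' where "e' > 0" and e': "\<And>s. t - e' < s \<Longrightarrow> s < t \<Longrightarrow> x s = w" by blast
  define s where "s = t - min e e' / 2"
  have "t - e < s" "t - e' < s" "s < t" using \<open>e > 0\<close> \<open>e' > 0\<close> by (auto simp: s_def)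
  then show "w = v" using assms(2) e' by metis
qed

lemma rho_of_ts:
  assumes "strict_mono ts"
  shows "rho_of ts \<alpha> (ts k) = \<alpha> k"
proof -
  have "(THE j. ts j = ts k) = k"
    using strict_mono_eq[OF assms] by (intro the_equality) auto
  then show ?thesis by (auto simp: rho_of_def)
qed

lemma rho_of_nonzero_imp_ts:
  assumes "rho_of ts \<alpha> s \<noteq> (\<lambda>_. False)"
  obtains k where "ts k = s"
  using assms by (auto simp: rho_of_def split: if_splits)

lemma strict_mono_unbounded_le_eq_lessThan:
  fixes ts :: "nat \<Rightarrow> 'a::linorder"
  assumes mono: "strict_mono ts" and unbdd: "\<forall>M. \<exists>k. M < ts k"
  obtains n where "{k. ts k \<le> t} = {..<n}"
proof
  let ?n = "LEAST k. t < ts k"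
  have "t < ts ?n" using unbdd by (metis LeastI)
  show "{k. ts k \<le> t} = {..<?n}"
  proof (intro set_eqI iffI)
    fix k assume "k \<in> {k. ts k \<le> t}"
    then show "k \<in> {..<?n}"
      using \<open>t < ts ?n\<close> mono by (metis mem_Collect_eq lessThan_iff not_le order.strict_trans2
          strict_mono_less_eq)
  qed (auto dest: not_less_Least)
qed

lemma rflow_rep_eq_iter:
  assumes n: "{k. ts k \<le> t} = {..<n}"
  shows "rflow_rep \<Phi> ts \<alpha> \<mu> t = iter \<Phi> \<alpha> \<mu> n"
proof (cases n)
  case 0
  then have "t < ts 0" using n by (metis empty_iff lessThan_0 mem_Collect_eq not_le)
  then show ?thesis using 0 by (simp add: rflow_rep_def)
next
  case (Suc k)
  have le: "ts j \<le> t \<longleftrightarrow> j \<le> k" for j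
    using eqset_imp_iff[OF n, of j] Suc by (simp add: less_Suc_eq_le)
  then have lt: "t < ts j \<longleftrightarrow> k < j" for j by (meson not_le)
  have "(THE j. ts j \<le> t \<and> t < ts (Suc j)) = k"
    by (rule the_equality) (auto simp: le lt)
  moreover have "\<not> t < ts 0" using le[of 0] by simp
  moreover have "nat (int k + 1) = Suc k" by simp
  ultimately show ?thesis using Suc by (simp add: rflow_rep_def dflow_def)
qed

definition active_upto :: "(real \<Rightarrow> 'n \<Rightarrow> bool) \<Rightarrow> real \<Rightarrow> real set"
  where "active_upto \<rho> t = {s. s \<le> t \<and> \<rho> s \<noteq> (\<lambda>_. False)}"

definition active_before :: "(real \<Rightarrow> 'n \<Rightarrow> bool) \<Rightarrow> real \<Rightarrow> real set"
  where "active_before \<rho> t = {s. s < t \<and> \<rho> s \<noteq> (\<lambda>_. False)}"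

definition upd_along :: "(('n \<Rightarrow> bool) \<Rightarrow> ('n \<Rightarrow> bool)) \<Rightarrow> (real \<Rightarrow> 'n \<Rightarrow> bool) \<Rightarrow>
    ('n \<Rightarrow> bool) \<Rightarrow> real list \<Rightarrow> ('n \<Rightarrow> bool)"
  where "upd_along \<Phi> \<rho> = foldl (\<lambda>st s. upd \<Phi> (\<rho> s) st)"

definition flow_of :: "(('n \<Rightarrow> bool) \<Rightarrow> ('n \<Rightarrow> bool)) \<Rightarrow> (real \<Rightarrow> 'n \<Rightarrow> bool) \<Rightarrow>
    ('n \<Rightarrow> bool) \<Rightarrow> real \<Rightarrow> ('n \<Rightarrow> bool)"
  where "flow_of \<Phi> \<rho> \<mu> t = upd_along \<Phi> \<rho> \<mu> (sorted_list_of_set (active_upto \<rho> t))"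

lemma active_upto_rho_of:
  assumes n: "{k. ts k \<le> t} = {..<n}"
  shows "active_upto (rho_of ts \<alpha>) t
    = set (filter (\<lambda>s. rho_of ts \<alpha> s \<noteq> (\<lambda>_. False)) (map ts [0..<n]))"
proof (intro set_eqI iffI)
  fix s assume s: "s \<in> active_upto (rho_of ts \<alpha>) t"
  then obtain k where "ts k = s" by (auto simp: active_upto_def elim: rho_of_nonzero_imp_ts)
  moreover have "k < n" using eqset_imp_iff[OF n, of k] s \<open>ts k = s\<close> by (simp add: active_upto_def)
  ultimately show "s \<in> set (filter (\<lambda>s. rho_of ts \<alpha> s \<noteq> (\<lambda>_. False)) (map ts [0..<n]))"
    using s by (auto simp: active_upto_def)
next
  fix s assume "s \<in> set (filter (\<lambda>s. rho_of ts \<alpha> s \<noteq> (\<lambda>_. False)) (map ts [0..<n]))"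
  then obtain k where "k < n" "s = ts k" "rho_of ts \<alpha> s \<noteq> (\<lambda>_. False)" by auto
  then show "s \<in> active_upto (rho_of ts \<alpha>) t"
    using eqset_imp_iff[OF n, of k] by (simp add: active_upto_def)
qed

lemma rflow_rep_eq_flow_of:
  assumes mono: "strict_mono ts" and unbdd: "\<forall>M. \<exists>k. M < ts k"
  shows "rflow_rep \<Phi> ts \<alpha> \<mu> t = flow_of \<Phi> (rho_of ts \<alpha>) \<mu> t"
proof -
  let ?\<rho> = "rho_of ts \<alpha>"
  obtain n where n: "{k. ts k \<le> t} = {..<n}"
    using strict_mono_unbounded_le_eq_lessThan[OF mono unbdd] .
  let ?xs = "filter (\<lambda>s. ?\<rho> s \<noteq> (\<lambda>_. False)) (map ts [0..<n])"
  have "sorted (map ts [0..<n])"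
    by (simp add: sorted_wrt_map strict_mono_less_eq[OF mono] sorted_wrt_mono_rel[OF _ sorted_wrt_upt])
  then have "sorted ?xs" by (rule sorted_wrt_filter)
  moreover have "distinct ?xs"
    using strict_mono_imp_inj_on[OF mono] by (simp add: distinct_map)
  ultimately have sorted_active: "sorted_list_of_set (active_upto ?\<rho> t) = ?xs"
    by (metis active_upto_rho_of[OF n] sorted_list_of_set.idem_if_sorted_distinct)
  have "rflow_rep \<Phi> ts \<alpha> \<mu> t = upd_along \<Phi> ?\<rho> \<mu> (map ts [0..<n])"
    by (simp add: rflow_rep_eq_iter[OF n] iter_foldl upd_along_def foldl_map rho_of_ts[OF mono])
  also have "\<dots> = upd_along \<Phi> ?\<rho> \<mu> ?xs"
    unfolding upd_along_def by (rule foldl_filter_idle[symmetric]) simp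
  finally show ?thesis by (simp add: flow_of_def sorted_active)
qed

lemma finite_active_upto_rho_of:
  assumes mono: "strict_mono ts" and unbdd: "\<forall>M. \<exists>k. M < ts k"
  shows "finite (active_upto (rho_of ts \<alpha>) t)"
proof -
  obtain n where "{k. ts k \<le> t} = {..<n}"
    using strict_mono_unbounded_le_eq_lessThan[OF mono unbdd] .
  then show ?thesis by (simp add: active_upto_rho_of)
qed

lemma rflow_eq_flow_of:
  assumes "is_rep \<rho> ts \<alpha>"
  shows "rflow \<Phi> \<rho> \<mu> = flow_of \<Phi> \<rho> \<mu>"
proof
  fix t
  define p where "p = (SOME p. is_rep \<rho> (fst p) (snd p))"
  have "is_rep \<rho> (fst p) (snd p)"
    unfolding p_def by (rule someI[of _ "(ts, \<alpha>)"]) (simp add: assms)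
  then have "rflow_rep \<Phi> (fst p) (snd p) \<mu> t = flow_of \<Phi> \<rho> \<mu> t"
    by (auto simp: is_rep_def rflow_rep_eq_flow_of)
  then show "rflow \<Phi> \<rho> \<mu> t = flow_of \<Phi> \<rho> \<mu> t"
    by (simp add: rflow_def p_def[symmetric])
qed

lemma is_rep_sigr_rho:
  assumes "is_rep \<rho> ts \<alpha>"
  shows "is_rep (sigr_rho t' \<rho>) ts (\<lambda>k. if t' \<le> ts k then \<alpha> k else (\<lambda>_. False))"
proof -
  have "sigr_rho t' (rho_of ts \<alpha>) t = rho_of ts (\<lambda>k. if t' \<le> ts k then \<alpha> k else (\<lambda>_. False)) t"
    if "strict_mono ts" for t
  proof (cases "\<exists>k. ts k = t")
    case True
    then show ?thesis by (auto simp: sigr_rho_def rho_of_ts[OF that])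
  qed (simp add: sigr_rho_def rho_of_def)
  then show ?thesis using assms by (auto simp: is_rep_def)
qed

lemma left_lim_flow_of:
  assumes fin: "finite (active_upto \<rho> t')"
  shows "left_lim (flow_of \<Phi> \<rho> \<mu>) t'
    = upd_along \<Phi> \<rho> \<mu> (sorted_list_of_set (active_before \<rho> t'))"
proof -
  define A where "A = active_before \<rho> t'"
  have "finite A"
    using fin by (rule rev_finite_subset) (auto simp: A_def active_before_def active_upto_def)
  define e :: real where "e = (if A = {} then 1 else t' - Max A)"
  have "e > 0"
    using Max_in[OF \<open>finite A\<close>] by (auto simp: e_def A_def active_before_def)
  moreover have "active_upto \<rho> s = A" if "t' - e < s" "s < t'" for s
  proof -
    have "x \<le> t' - e" if "x \<in> A" for x
      using that \<open>finite A\<close> by (auto simp: e_def)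
    then show ?thesis
      using \<open>t' - e < s\<close> \<open>s < t'\<close> by (fastforce simp: A_def active_before_def active_upto_def)
  qed
  ultimately show ?thesis
    unfolding A_def[symmetric] by (intro left_lim_eqI[of e]) (simp_all add: flow_of_def)
qed

lemma flow_of_restart:
  assumes fin: "finite (active_upto \<rho> t)" and "t' \<le> t"
  shows "flow_of \<Phi> \<rho> \<mu> t = flow_of \<Phi> (sigr_rho t' \<rho>)
           (upd_along \<Phi> \<rho> \<mu> (sorted_list_of_set (active_before \<rho> t'))) t"
proof -
  define A where "A = active_before \<rho> t'"
  define B where "B = active_upto (sigr_rho t' \<rho>) t"
  have split: "active_upto \<rho> t = A \<union> B"
    using \<open>t' \<le> t\<close> by (auto simp: A_def B_def active_before_def active_upto_def sigr_rho_def)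
  have late: "t' \<le> b" if "b \<in> B" for b
    using that by (auto simp: B_def active_upto_def sigr_rho_def split: if_splits)
  have "finite A" "finite B" using fin split by auto
  moreover have "\<forall>a\<in>A. \<forall>b\<in>B. a < b" using late by (fastforce simp: A_def active_before_def)
  ultimately have "flow_of \<Phi> \<rho> \<mu> t
      = upd_along \<Phi> \<rho> (upd_along \<Phi> \<rho> \<mu> (sorted_list_of_set A)) (sorted_list_of_set B)"
    by (simp add: flow_of_def split sorted_list_of_set_Un_less upd_along_def)
  also have "\<dots> = upd_along \<Phi> (sigr_rho t' \<rho>) (upd_along \<Phi> \<rho> \<mu> (sorted_list_of_set A))
      (sorted_list_of_set B)"
    unfolding upd_along_def
    by (rule foldl_cong) (use \<open>finite B\<close> late in \<open>auto simp: sigr_rho_def\<close>)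
  finally show ?thesis by (simp add: flow_of_def A_def B_def)
qed

lemma flow_of_sigr_rho_before:
  assumes "t < t'"
  shows "flow_of \<Phi> (sigr_rho t' \<rho>) \<mu> t = \<mu>"
proof -
  have "active_upto (sigr_rho t' \<rho>) t = {}"
    using assms by (auto simp: active_upto_def sigr_rho_def)
  then show ?thesis by (simp add: flow_of_def upd_along_def)
qed

theorem theorem29:
  fixes \<Phi> :: "('n::finite \<Rightarrow> bool) \<Rightarrow> ('n \<Rightarrow> bool)"
    and \<mu> :: "'n \<Rightarrow> bool"
    and \<alpha> :: "nat \<Rightarrow> 'n \<Rightarrow> bool"
    and ts :: "nat \<Rightarrow> real"
    and \<rho> :: "real \<Rightarrow> 'n \<Rightarrow> bool"
  assumes prog: "progressive \<alpha>"
    and mono: "strict_mono ts"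
    and unbdd: "\<forall>M. \<exists>k. M < ts k"
    and rho: "\<rho> = rho_of ts \<alpha>"
  shows "(\<forall>k'::nat. \<forall>k::int. k \<ge> -1 \<longrightarrow>
            sigd k' (dflow \<Phi> \<alpha> \<mu>) k
              = dflow \<Phi> (sigd_alpha k' \<alpha>) (dflow \<Phi> \<alpha> \<mu> (int k' - 1)) k)
       \<and> (\<forall>t'::real. \<forall>t::real.
            sigr t' (rflow \<Phi> \<rho> \<mu>) t
              = rflow \<Phi> (sigr_rho t' \<rho>) (left_lim (rflow \<Phi> \<rho> \<mu>) t') t)"
proof (intro conjI allI impI)
  fix k' :: nat and k :: int
  assume "k \<ge> -1"
  then have "nat (k + int k' + 1) = nat (k + 1) + k'" by simp
  then show "sigd k' (dflow \<Phi> \<alpha> \<mu>) k = dflow \<Phi> (sigd_alpha k' \<alpha>) (dflow \<Phi> \<alpha> \<mu> (int k' - 1)) k"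
    by (simp add: sigd_def dflow_def iter_add)
next
  fix t' t :: real
  have rep: "is_rep \<rho> ts \<alpha>" using mono unbdd rho by (simp add: is_rep_def)
  have fin: "finite (active_upto \<rho> s)" for s
    using finite_active_upto_rho_of[OF mono unbdd] rho by simp
  show "sigr t' (rflow \<Phi> \<rho> \<mu>) t = rflow \<Phi> (sigr_rho t' \<rho>) (left_lim (rflow \<Phi> \<rho> \<mu>) t') t"
    unfolding rflow_eq_flow_of[OF rep] rflow_eq_flow_of[OF is_rep_sigr_rho[OF rep]]
    by (simp add: sigr_def left_lim_flow_of[OF fin] flow_of_restart[OF fin]
        flow_of_sigr_rho_before)
qed

end
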